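(* There is a family of FMSM instances, with ground sets of size $n$ for arbitrarily large $n$, in which $f$ is monotone submodular and $\mathcal{I}$ is a partition matroid, such that $\max_{S \in \mathcal{F}} f(S) = 1$ but there is a point $x \in P_{\mathcal{F}}$ whose multilinear extension value satisfies $F(x) = \Omega(\sqrt{n})$.
   Context: An FMSM instance consists of a ground set $V$ of $n$ elements, a non-negative submodular function $f : 2^V \to \mathbb{R}_{\ge 0}$, a matroid $\mathcal{I} \subseteq 2^V$, a partition of $V$ into color groups $V_1,\dots,V_C$, and integer bounds $0 \le \ell_c \le u_c$. Fair sets: $\mathcal{C} = \{S : \ell_c \le |S \cap V_c| \le u_c\ \forall c\}$; feasible sets $\mathcal{F} = \mathcal{I} \cap \mathcal{C}$. $P_{\mathcal{F}}$ is the convex hull of the indicator vectors $\mathbb{1}_S$, $S \in \mathcal{F}$. The multilinear extension of $f$ is $F(x) = \sum_{S \subseteq V} f(S) \prod_{i \in S} x_i \prod_{j \notin S}(1-x_j)$ for $x \in [0,1]^n$. $f$ is monotone if $f(Y) \le f(X)$ whenever $Y \subseteq X$. A partition matroid is given by a partition of $V$ into blocks $G_i$ with bounds $k_i$, a set $X$ being independent iff $|X \cap G_i| \le k_i$ for all $i$. *)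

theory Defs
  imports "HOL-Analysis.Analysis"
begin

definition is_partition :: "nat set \<Rightarrow> (nat \<Rightarrow> nat set) \<Rightarrow> nat set \<Rightarrow> bool" where
  "is_partition V P I \<longleftrightarrow> (\<forall>i\<in>I. P i \<noteq> {} \<and> P i \<subseteq> V)
     \<and> (\<forall>i\<in>I. \<forall>j\<in>I. i \<noteq> j \<longrightarrow> P i \<inter> P j = {}) \<and> (\<Union>i\<in>I. P i) = V"

definition nonneg_set_fun :: "nat set \<Rightarrow> (nat set \<Rightarrow> real) \<Rightarrow> bool" where
  "nonneg_set_fun V f \<longleftrightarrow> (\<forall>S. S \<subseteq> V \<longrightarrow> f S \<ge> 0)"

definition submodular :: "nat set \<Rightarrow> (nat set \<Rightarrow> real) \<Rightarrow> bool" where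
  "submodular V f \<longleftrightarrow> (\<forall>X Y. X \<subseteq> V \<longrightarrow> Y \<subseteq> V \<longrightarrow> f (X \<union> Y) + f (X \<inter> Y) \<le> f X + f Y)"

definition monotone_set_fun :: "nat set \<Rightarrow> (nat set \<Rightarrow> real) \<Rightarrow> bool" where
  "monotone_set_fun V f \<longleftrightarrow> (\<forall>X Y. Y \<subseteq> X \<longrightarrow> X \<subseteq> V \<longrightarrow> f Y \<le> f X)"

definition partition_matroid :: "nat set \<Rightarrow> (nat \<Rightarrow> nat set) \<Rightarrow> nat \<Rightarrow> (nat \<Rightarrow> nat) \<Rightarrow> nat set set" where
  "partition_matroid V G m k = {X. X \<subseteq> V \<and> (\<forall>i<m. card (X \<inter> G i) \<le> k i)}"

definition fair_sets :: "nat set \<Rightarrow> (nat \<Rightarrow> nat set) \<Rightarrow> nat \<Rightarrow> (nat \<Rightarrow> nat) \<Rightarrow> (nat \<Rightarrow> nat) \<Rightarrow> nat set set" where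
  "fair_sets V Vc C l u = {S. S \<subseteq> V \<and> (\<forall>c<C. l c \<le> card (S \<inter> Vc c) \<and> card (S \<inter> Vc c) \<le> u c)}"

definition indicator_polytope :: "nat set set \<Rightarrow> (nat \<Rightarrow> real) set" where
  "indicator_polytope Fam = {x. \<exists>w::nat set \<Rightarrow> real. (\<forall>S\<in>Fam. 0 \<le> w S) \<and> sum w Fam = 1
        \<and> (\<forall>i. x i = (\<Sum>S\<in>Fam. w S * indicator S i))}"

definition multilinear_ext :: "nat set \<Rightarrow> (nat set \<Rightarrow> real) \<Rightarrow> (nat \<Rightarrow> real) \<Rightarrow> real" where
  "multilinear_ext V f x = (\<Sum>S\<in>Pow V. f S * (\<Prod>i\<in>S. x i) * (\<Prod>j\<in>V - S. 1 - x j))"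

end

theory Submission
  imports Defs
begin

(* Lay out the ground set as m rows of 2m+1 cells, n = m(2m+1). Within a row the matroid
   pairs the cells 2k, 2k+1 and the colours pair the cells 2k+1, 2k+2, each with bound one;
   one further matroid block collects the last cells of all rows, one further colour the
   first cells. So a feasible set containing an even cell of a row is forced, two cells at a
   time, to contain the last cell of that row, and it meets the even cells of at most one row:
   the coverage function counting such rows has maximum 1. Yet for every row i, the even cells
   of row i together with the odd cells of all other rows form a feasible set, and the average
   x of these m sets is 1/m on every even cell, whence
   F(x) = m (1 - (1 - 1/m)^(m+1)) >= m/2 >= sqrt n / 4. *)

lemma multilinear_ext_sum:
  "multilinear_ext V (\<lambda>S. \<Sum>i\<in>I. f i S) x = (\<Sum>i\<in>I. multilinear_ext V (f i) x)"
  unfolding multilinear_ext_def by (simp add: sum_distrib_right sum.swap[of _ I])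

lemma multilinear_ext_diff:
  "multilinear_ext V (\<lambda>S. f S - g S) x = multilinear_ext V f x - multilinear_ext V g x"
  unfolding multilinear_ext_def by (simp add: left_diff_distrib sum_subtractf)

lemma multilinear_ext_one:
  assumes "finite V"
  shows "multilinear_ext V (\<lambda>_. 1) x = 1"
  unfolding multilinear_ext_def using prod_add[OF assms, of x "\<lambda>j. 1 - x j"] by simp

lemma multilinear_ext_avoids:
  assumes V: "finite V" and E: "E \<subseteq> V"
  shows "multilinear_ext V (\<lambda>S. of_bool (S \<inter> E = {})) x = (\<Prod>j\<in>E. 1 - x j)"
proof -
  have "multilinear_ext V (\<lambda>S. of_bool (S \<inter> E = {})) x
      = (\<Sum>S\<in>Pow (V - E). (\<Prod>i\<in>S. x i) * (\<Prod>j\<in>V - S. 1 - x j))"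
    unfolding multilinear_ext_def
    by (rule sum.mono_neutral_cong_right) (use V E in auto)
  also have "\<dots> = (\<Sum>S\<in>Pow (V - E).
      (\<Prod>j\<in>E. 1 - x j) * ((\<Prod>i\<in>S. x i) * (\<Prod>j\<in>(V - E) - S. 1 - x j)))"
  proof (rule sum.cong[OF refl])
    fix S assume "S \<in> Pow (V - E)"
    then have "V - S = E \<union> ((V - E) - S)" "E \<inter> ((V - E) - S) = {}" using E by auto
    then have "(\<Prod>j\<in>V - S. 1 - x j) = (\<Prod>j\<in>E. 1 - x j) * (\<Prod>j\<in>(V - E) - S. 1 - x j)"
      using V E by (simp add: prod.union_disjoint finite_subset)
    then show "(\<Prod>i\<in>S. x i) * (\<Prod>j\<in>V - S. 1 - x j)
        = (\<Prod>j\<in>E. 1 - x j) * ((\<Prod>i\<in>S. x i) * (\<Prod>j\<in>(V - E) - S. 1 - x j))"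
      by simp
  qed
  also have "\<dots> = (\<Prod>j\<in>E. 1 - x j)"
    using multilinear_ext_one[of "V - E" x] V
    by (simp add: multilinear_ext_def sum_distrib_left[symmetric])
  finally show ?thesis .
qed

definition coverage :: "nat set \<Rightarrow> (nat \<Rightarrow> nat set) \<Rightarrow> nat set \<Rightarrow> real" where
  "coverage I E S = real (card {i \<in> I. S \<inter> E i \<noteq> {}})"

lemma coverage_nonneg: "nonneg_set_fun V (coverage I E)"
  unfolding nonneg_set_fun_def coverage_def by simp

lemma coverage_mono:
  assumes "finite I"
  shows "monotone_set_fun V (coverage I E)"
  unfolding monotone_set_fun_def coverage_def
  using assms by (auto intro!: card_mono)

lemma coverage_submodular:
  assumes "finite I"
  shows "submodular V (coverage I E)"
  unfolding submodular_def coverage_def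
proof (intro allI impI)
  fix X Y :: "nat set"
  let ?hit = "\<lambda>Z. {i \<in> I. Z \<inter> E i \<noteq> {}}"
  have fin: "finite (?hit Z)" for Z using assms by simp
  have "?hit (X \<union> Y) = ?hit X \<union> ?hit Y" by auto
  moreover have "card (?hit (X \<inter> Y)) \<le> card (?hit X \<inter> ?hit Y)"
    using fin by (intro card_mono) auto
  ultimately have "card (?hit (X \<union> Y)) + card (?hit (X \<inter> Y)) \<le> card (?hit X) + card (?hit Y)"
    using card_Un_Int[OF fin fin, of X Y] by simp
  then show "real (card (?hit (X \<union> Y))) + real (card (?hit (X \<inter> Y)))
      \<le> real (card (?hit X)) + real (card (?hit Y))"
    by linarith
qed

lemma multilinear_ext_coverage:
  assumes "finite V" "finite I" "\<And>i. i \<in> I \<Longrightarrow> E i \<subseteq> V"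
  shows "multilinear_ext V (coverage I E) x = (\<Sum>i\<in>I. 1 - (\<Prod>j\<in>E i. 1 - x j))"
proof -
  have "coverage I E S = (\<Sum>i\<in>I. 1 - of_bool (S \<inter> E i = {}))" for S
  proof -
    have "(\<Sum>i\<in>I. 1 - of_bool (S \<inter> E i = {})) = (\<Sum>i\<in>I. of_bool (S \<inter> E i \<noteq> {}) :: real)"
      by (intro sum.cong) auto
    then show ?thesis using assms(2) by (simp add: coverage_def Collect_conj_eq)
  qed
  then have "coverage I E = (\<lambda>S. \<Sum>i\<in>I. 1 - of_bool (S \<inter> E i = {}))" by blast
  then show ?thesis
    using assms
    by (simp add: multilinear_ext_sum multilinear_ext_diff multilinear_ext_one multilinear_ext_avoids)
qed

lemma is_partition_fibres:
  assumes "g ` V = I"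
  shows "is_partition V (\<lambda>j. {p \<in> V. g p = j}) I"
  using assms unfolding is_partition_def by blast

lemma convex_combination_in_indicator_polytope:
  assumes "finite Fam" "finite I" "T ` I \<subseteq> Fam" "\<And>i. i \<in> I \<Longrightarrow> 0 \<le> w i" "sum w I = 1"
  shows "(\<lambda>p. \<Sum>i\<in>I. w i * indicator (T i) p) \<in> indicator_polytope Fam"
proof -
  define v where "v S = (\<Sum>i\<in>I. if T i = S then w i else 0)" for S
  have v_sum: "(\<Sum>S\<in>Fam. v S * g S) = (\<Sum>i\<in>I. w i * g (T i))" for g :: "nat set \<Rightarrow> real"
  proof -
    have "(\<Sum>S\<in>Fam. v S * g S) = (\<Sum>i\<in>I. \<Sum>S\<in>Fam. if T i = S then w i * g S else 0)"
      unfolding v_def sum_distrib_right by (subst sum.swap) (auto intro!: sum.cong)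
    also have "\<dots> = (\<Sum>i\<in>I. w i * g (T i))"
      using assms(1,3) by (auto simp: sum.delta intro!: sum.cong)
    finally show ?thesis .
  qed
  have "\<forall>S\<in>Fam. 0 \<le> v S" unfolding v_def using assms(4) by (auto intro: sum_nonneg)
  moreover have "sum v Fam = 1" using v_sum[of "\<lambda>_. 1"] assms(5) by simp
  moreover have "(\<Sum>i\<in>I. w i * indicator (T i) p) = (\<Sum>S\<in>Fam. v S * indicator S p)" for p
    using v_sum[of "\<lambda>S. indicator S p"] by simp
  ultimately show ?thesis unfolding indicator_polytope_def by blast
qed

lemma one_minus_inverse_power_le_half:
  assumes "0 < m"
  shows "(1 - 1 / real m) ^ (m + 1) \<le> 1 / 2"
proof -
  have a: "0 \<le> 1 - 1 / real m" "1 - 1 / real m \<le> 1" using assms by (auto simp: field_simps)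
  have "(1 - 1 / real m) ^ (m + 1) \<le> (1 - 1 / real m) ^ m"
    using a by (intro power_decreasing) auto
  also have "\<dots> \<le> exp (- 1 / real m) ^ m"
    using a exp_ge_add_one_self[of "- 1 / real m"] by (intro power_mono) auto
  also have "\<dots> = exp (-1)" using assms by (simp add: exp_of_nat_mult[symmetric])
  also have "\<dots> \<le> 1 / 2"
    using exp_ge_add_one_self[of 1] by (simp add: exp_minus field_simps)
  finally show ?thesis .
qed

lemma mult_add_inject:
  fixes a b c d m :: nat
  assumes "b < m" "d < m"
  shows "a * m + b = c * m + d \<longleftrightarrow> a = c \<and> b = d"
  by (metis assms add.commute div_mult_self1 div_less mod_mult_self1 mod_less
      add_0_right mult_eq_0_iff not_less_zero)

lemma mult_add_less_mult:
  fixes i k m w :: nat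
  assumes "i < m" "k < w"
  shows "i * w + k < m * w"
proof -
  have "i * w + k < Suc i * w" using assms(2) by simp
  also have "\<dots> \<le> m * w" using assms(1) by (intro mult_le_mono1) simp
  finally show ?thesis .
qed

lemma less_square_Suc_cases:
  fixes j m :: nat
  assumes "j < m * m + 1"
  obtains (pair) i k where "i < m" "k < m" "j = i * m + k" | (last) "j = m * m"
proof (cases "j < m * m")
  case True
  then have "0 < m" by (cases m) auto
  with True have "j div m < m" "j mod m < m" by (simp_all add: div_less_iff_less_mult)
  then show ?thesis using pair[of "j div m" "j mod m"] by simp
next
  case False
  then show ?thesis using assms last by simp
qed

lemma card_Int_doubleton_eq_1:
  assumes "a \<noteq> b" "a \<in> S \<longleftrightarrow> b \<notin> S"
  shows "card (S \<inter> {a, b}) = 1"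
  using assms by (cases "a \<in> S") (auto simp: Int_insert_right)

definition cell :: "nat \<Rightarrow> nat \<Rightarrow> nat \<Rightarrow> nat" where
  "cell m i t = i * (2 * m + 1) + t"

lemma cell_less: "i < m \<Longrightarrow> t \<le> 2 * m \<Longrightarrow> cell m i t < m * (2 * m + 1)"
  unfolding cell_def by (rule mult_add_less_mult) auto

lemma cell_inject:
  "t \<le> 2 * m \<Longrightarrow> t' \<le> 2 * m \<Longrightarrow> cell m i t = cell m i' t' \<longleftrightarrow> i = i' \<and> t = t'"
  unfolding cell_def by (rule mult_add_inject) auto

lemma cell_div_mod:
  assumes "t \<le> 2 * m"
  shows "cell m i t div (2 * m + 1) = i" "cell m i t mod (2 * m + 1) = t"
proof -
  have "i * (2 * m + 1) + t
      = cell m i t div (2 * m + 1) * (2 * m + 1) + cell m i t mod (2 * m + 1)"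
    unfolding cell_def by (rule div_mult_mod_eq[symmetric])
  then show "cell m i t div (2 * m + 1) = i" "cell m i t mod (2 * m + 1) = t"
    using mult_add_inject[of t "2 * m + 1" "cell m i t mod (2 * m + 1)"] assms by auto
qed

lemma cell_cases:
  assumes "p < m * (2 * m + 1)"
  obtains i t where "i < m" "t \<le> 2 * m" "p = cell m i t"
proof
  show "p div (2 * m + 1) < m" using assms by (simp add: div_less_iff_less_mult)
  show "p mod (2 * m + 1) \<le> 2 * m" using mod_less_divisor[of "2 * m + 1" p] by linarith
  show "p = cell m (p div (2 * m + 1)) (p mod (2 * m + 1))"
    unfolding cell_def by (rule div_mult_mod_eq[symmetric])
qed

definition block_of :: "nat \<Rightarrow> nat \<Rightarrow> nat" where
  "block_of m p = (let i = p div (2 * m + 1); t = p mod (2 * m + 1) in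
     if t = 2 * m then m * m else i * m + t div 2)"

definition colour_of :: "nat \<Rightarrow> nat \<Rightarrow> nat" where
  "colour_of m p = (let i = p div (2 * m + 1); t = p mod (2 * m + 1) in
     if t = 0 then m * m else i * m + (t - 1) div 2)"

lemma block_of_cell:
  "t \<le> 2 * m \<Longrightarrow> block_of m (cell m i t) = (if t = 2 * m then m * m else i * m + t div 2)"
  by (simp only: block_of_def Let_def cell_div_mod)

lemma colour_of_cell:
  "t \<le> 2 * m \<Longrightarrow> colour_of m (cell m i t) = (if t = 0 then m * m else i * m + (t - 1) div 2)"
  by (simp only: colour_of_def Let_def cell_div_mod)

definition matroid_block :: "nat \<Rightarrow> nat \<Rightarrow> nat set" where
  "matroid_block m j = {p \<in> {..<m * (2 * m + 1)}. block_of m p = j}"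

definition colour_group :: "nat \<Rightarrow> nat \<Rightarrow> nat set" where
  "colour_group m j = {p \<in> {..<m * (2 * m + 1)}. colour_of m p = j}"

lemma matroid_block_pair:
  assumes "i < m" "k < m"
  shows "matroid_block m (i * m + k) = {cell m i (2 * k), cell m i (2 * k + 1)}"
proof (intro set_eqI iffI)
  fix p assume "p \<in> matroid_block m (i * m + k)"
  then have p: "p < m * (2 * m + 1)" and b: "block_of m p = i * m + k"
    by (auto simp: matroid_block_def)
  from p obtain i' t where i': "i' < m" and t: "t \<le> 2 * m" and p_eq: "p = cell m i' t"
    by (rule cell_cases)
  have "t \<noteq> 2 * m"
    using b block_of_cell[OF t] mult_add_less_mult[OF assms] p_eq by (auto split: if_splits)
  then have "i' * m + t div 2 = i * m + k" "t div 2 < m" using b block_of_cell[OF t] t p_eq by auto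
  then have "i' = i" "t div 2 = k" using mult_add_inject assms(2) by blast+
  moreover from \<open>t div 2 = k\<close> have "t = 2 * k \<or> t = 2 * k + 1" by linarith
  ultimately show "p \<in> {cell m i (2 * k), cell m i (2 * k + 1)}" using p_eq by auto
next
  fix p assume "p \<in> {cell m i (2 * k), cell m i (2 * k + 1)}"
  then show "p \<in> matroid_block m (i * m + k)"
    using assms cell_less[of i m] by (auto simp: matroid_block_def block_of_cell)
qed

lemma matroid_block_row_ends: "matroid_block m (m * m) = (\<lambda>i. cell m i (2 * m)) ` {..<m}"
proof (intro set_eqI iffI)
  fix p assume "p \<in> matroid_block m (m * m)"
  then have p: "p < m * (2 * m + 1)" and b: "block_of m p = m * m"
    by (auto simp: matroid_block_def)
  from p obtain i t where i: "i < m" and t: "t \<le> 2 * m" and p_eq: "p = cell m i t"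
    by (rule cell_cases)
  have "t = 2 * m"
  proof (rule ccontr)
    assume "t \<noteq> 2 * m"
    then have "t div 2 < m" using t by auto
    then show False
      using b block_of_cell[OF t] mult_add_less_mult[OF i] p_eq \<open>t \<noteq> 2 * m\<close> by force
  qed
  then show "p \<in> (\<lambda>i. cell m i (2 * m)) ` {..<m}" using i p_eq by auto
qed (use cell_less in \<open>auto simp: matroid_block_def block_of_cell\<close>)

lemma colour_group_pair:
  assumes "i < m" "k < m"
  shows "colour_group m (i * m + k) = {cell m i (2 * k + 1), cell m i (2 * k + 2)}"
proof (intro set_eqI iffI)
  fix p assume "p \<in> colour_group m (i * m + k)"
  then have p: "p < m * (2 * m + 1)" and c: "colour_of m p = i * m + k"
    by (auto simp: colour_group_def)
  from p obtain i' t where i': "i' < m" and t: "t \<le> 2 * m" and p_eq: "p = cell m i' t"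
    by (rule cell_cases)
  have "t \<noteq> 0"
    using c colour_of_cell[OF t] mult_add_less_mult[OF assms] p_eq by (auto split: if_splits)
  then have "i' * m + (t - 1) div 2 = i * m + k" "(t - 1) div 2 < m"
    using c colour_of_cell[OF t] t p_eq by auto
  then have "i' = i" "(t - 1) div 2 = k" using mult_add_inject assms(2) by blast+
  moreover from \<open>(t - 1) div 2 = k\<close> \<open>t \<noteq> 0\<close> have "t = 2 * k + 1 \<or> t = 2 * k + 2" by linarith
  ultimately show "p \<in> {cell m i (2 * k + 1), cell m i (2 * k + 2)}" using p_eq by auto
next
  fix p assume "p \<in> {cell m i (2 * k + 1), cell m i (2 * k + 2)}"
  then show "p \<in> colour_group m (i * m + k)"
    using assms cell_less[of i m] by (auto simp: colour_group_def colour_of_cell)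
qed

lemma colour_group_row_starts: "colour_group m (m * m) = (\<lambda>i. cell m i 0) ` {..<m}"
proof (intro set_eqI iffI)
  fix p assume "p \<in> colour_group m (m * m)"
  then have p: "p < m * (2 * m + 1)" and c: "colour_of m p = m * m"
    by (auto simp: colour_group_def)
  from p obtain i t where i: "i < m" and t: "t \<le> 2 * m" and p_eq: "p = cell m i t"
    by (rule cell_cases)
  have "t = 0"
  proof (rule ccontr)
    assume "t \<noteq> 0"
    then have "(t - 1) div 2 < m" using t by auto
    then show False
      using c colour_of_cell[OF t] mult_add_less_mult[OF i] p_eq \<open>t \<noteq> 0\<close> by force
  qed
  then show "p \<in> (\<lambda>i. cell m i 0) ` {..<m}" using i p_eq by auto
qed (use cell_less in \<open>auto simp: colour_group_def colour_of_cell\<close>)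

lemma block_of_less:
  assumes "p < m * (2 * m + 1)"
  shows "block_of m p < m * m + 1"
proof -
  from assms obtain i t where i: "i < m" and t: "t \<le> 2 * m" and p: "p = cell m i t"
    by (rule cell_cases)
  have "block_of m p = (if t = 2 * m then m * m else i * m + t div 2)"
    unfolding p by (rule block_of_cell[OF t])
  moreover have "\<not> t = 2 * m \<Longrightarrow> i * m + t div 2 < m * m"
    using t by (intro mult_add_less_mult[OF i]) auto
  ultimately show ?thesis by auto
qed

lemma colour_of_less:
  assumes "p < m * (2 * m + 1)"
  shows "colour_of m p < m * m + 1"
proof -
  from assms obtain i t where i: "i < m" and t: "t \<le> 2 * m" and p: "p = cell m i t"
    by (rule cell_cases)
  have "colour_of m p = (if t = 0 then m * m else i * m + (t - 1) div 2)"
    unfolding p by (rule colour_of_cell[OF t])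
  moreover have "\<not> t = 0 \<Longrightarrow> i * m + (t - 1) div 2 < m * m"
    using t by (intro mult_add_less_mult[OF i]) auto
  ultimately show ?thesis by auto
qed

lemma is_partition_matroid_block:
  assumes "0 < m"
  shows "is_partition {..<m * (2 * m + 1)} (matroid_block m) {..<m * m + 1}"
proof -
  have "matroid_block m j \<noteq> {}" if "j < m * m + 1" for j
    using that assms
    by (cases rule: less_square_Suc_cases)
      (simp_all add: matroid_block_pair matroid_block_row_ends lessThan_empty_iff)
  then have "block_of m ` {..<m * (2 * m + 1)} = {..<m * m + 1}"
    using block_of_less by (fastforce simp: matroid_block_def)
  then show ?thesis unfolding matroid_block_def[abs_def] by (rule is_partition_fibres)
qed

lemma is_partition_colour_group:
  assumes "0 < m"
  shows "is_partition {..<m * (2 * m + 1)} (colour_group m) {..<m * m + 1}"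
proof -
  have "colour_group m j \<noteq> {}" if "j < m * m + 1" for j
    using that assms
    by (cases rule: less_square_Suc_cases)
      (simp_all add: colour_group_pair colour_group_row_starts lessThan_empty_iff)
  then have "colour_of m ` {..<m * (2 * m + 1)} = {..<m * m + 1}"
    using colour_of_less by (fastforce simp: colour_group_def)
  then show ?thesis unfolding colour_group_def[abs_def] by (rule is_partition_fibres)
qed

definition feasible :: "nat \<Rightarrow> nat set set" where
  "feasible m = partition_matroid {..<m * (2 * m + 1)} (matroid_block m) (m * m + 1) (\<lambda>_. 1)
     \<inter> fair_sets {..<m * (2 * m + 1)} (colour_group m) (m * m + 1) (\<lambda>_. 1) (\<lambda>_. 1)"

lemma feasible_iff:
  "S \<in> feasible m \<longleftrightarrow> S \<subseteq> {..<m * (2 * m + 1)}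
     \<and> (\<forall>j < m * m + 1. card (S \<inter> matroid_block m j) \<le> 1 \<and> card (S \<inter> colour_group m j) = 1)"
  unfolding feasible_def partition_matroid_def fair_sets_def by auto

lemma finite_feasible: "finite (feasible m)"
  by (rule finite_subset[of _ "Pow {..<m * (2 * m + 1)}"]) (auto simp: feasible_iff)

lemma feasible_step:
  assumes S: "S \<in> feasible m" and "i < m" "k < m" and even: "cell m i (2 * k) \<in> S"
  shows "cell m i (2 * (k + 1)) \<in> S"
proof -
  have "i * m + k < m * m + 1" using mult_add_less_mult[OF assms(2,3)] by simp
  with S have "card (S \<inter> matroid_block m (i * m + k)) \<le> 1"
    and "card (S \<inter> colour_group m (i * m + k)) = 1"
    unfolding feasible_iff by blast+
  then have block: "card (S \<inter> {cell m i (2 * k), cell m i (2 * k + 1)}) \<le> 1"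
    and colour: "card (S \<inter> {cell m i (2 * k + 1), cell m i (2 * k + 2)}) = 1"
    unfolding matroid_block_pair[OF assms(2,3)] colour_group_pair[OF assms(2,3)] .
  have "cell m i (2 * k) \<noteq> cell m i (2 * k + 1)" by (simp add: cell_def)
  with block even have "cell m i (2 * k + 1) \<notin> S" by (auto simp: Int_insert_right)
  with colour show ?thesis by (auto simp: Int_insert_right split: if_splits)
qed

lemma feasible_reaches_row_end:
  assumes S: "S \<in> feasible m" and i: "i < m" and "k \<le> m" "cell m i (2 * k) \<in> S"
  shows "cell m i (2 * m) \<in> S"
  using assms(3,4)
proof (induction k rule: inc_induct)
  case (step k)
  then show ?case using feasible_step[OF S i] by simp
qed

definition even_cells :: "nat \<Rightarrow> nat \<Rightarrow> nat set" where
  "even_cells m i = (\<lambda>k. cell m i (2 * k)) ` {..m}"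

lemma even_cells_subset: "i < m \<Longrightarrow> even_cells m i \<subseteq> {..<m * (2 * m + 1)}"
  using cell_less by (auto simp: even_cells_def)

lemma card_even_cells: "card (even_cells m i) = m + 1"
proof -
  have "inj_on (\<lambda>k. cell m i (2 * k)) {..m}" by (rule inj_onI) (simp add: cell_inject)
  then show ?thesis by (simp add: even_cells_def card_image)
qed

lemma coverage_feasible_le_1:
  assumes S: "S \<in> feasible m"
  shows "coverage {..<m} (even_cells m) S \<le> 1"
proof -
  let ?hit = "{i \<in> {..<m}. S \<inter> even_cells m i \<noteq> {}}"
  have row_end: "cell m i (2 * m) \<in> S \<inter> matroid_block m (m * m)" if "i \<in> ?hit" for i
    using that feasible_reaches_row_end[OF S]
    by (auto simp: even_cells_def matroid_block_row_ends)
  have "finite (S \<inter> matroid_block m (m * m))" by (simp add: matroid_block_def)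
  moreover have "card (S \<inter> matroid_block m (m * m)) \<le> 1" using S by (simp add: feasible_iff)
  ultimately have row_ends_eq:
      "\<forall>p\<in>S \<inter> matroid_block m (m * m). \<forall>q\<in>S \<inter> matroid_block m (m * m). p = q"
    by (simp add: card_le_Suc0_iff_eq)
  have "i = i'" if "i \<in> ?hit" "i' \<in> ?hit" for i i'
  proof -
    have "cell m i (2 * m) = cell m i' (2 * m)"
      using row_end[OF that(1)] row_end[OF that(2)] row_ends_eq by blast
    then show "i = i'" by (simp add: cell_inject)
  qed
  then have "card ?hit \<le> 1" by (simp add: card_le_Suc0_iff_eq)
  then show ?thesis by (simp add: coverage_def)
qed

definition even_row_odd_rest :: "nat \<Rightarrow> nat \<Rightarrow> nat set" where
  "even_row_odd_rest m i = {cell m i' t | i' t. i' < m \<and> t \<le> 2 * m \<and> (i' = i \<longleftrightarrow> even t)}"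

lemma cell_in_even_row_odd_rest:
  "i' < m \<Longrightarrow> t \<le> 2 * m \<Longrightarrow> cell m i' t \<in> even_row_odd_rest m i \<longleftrightarrow> (i' = i \<longleftrightarrow> even t)"
  unfolding even_row_odd_rest_def by (auto simp: cell_inject)

lemma even_row_odd_rest_feasible:
  assumes i: "i < m"
  shows "even_row_odd_rest m i \<in> feasible m"
  unfolding feasible_iff
proof (rule conjI)
  let ?T = "even_row_odd_rest m i"
  show "?T \<subseteq> {..<m * (2 * m + 1)}" using cell_less by (auto simp: even_row_odd_rest_def)
  show "\<forall>j < m * m + 1. card (?T \<inter> matroid_block m j) \<le> 1 \<and> card (?T \<inter> colour_group m j) = 1"
  proof (intro allI impI)
    fix j assume "j < m * m + 1"
    then show "card (?T \<inter> matroid_block m j) \<le> 1 \<and> card (?T \<inter> colour_group m j) = 1"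
    proof (cases rule: less_square_Suc_cases)
      case (pair i' k)
      then show ?thesis
        by (simp add: matroid_block_pair colour_group_pair card_Int_doubleton_eq_1
            cell_in_even_row_odd_rest cell_inject)
    next
      case last
      have "?T \<inter> (\<lambda>i'. cell m i' (2 * m)) ` {..<m} = {cell m i (2 * m)}"
        and "?T \<inter> (\<lambda>i'. cell m i' 0) ` {..<m} = {cell m i 0}"
        using i by (auto simp: cell_in_even_row_odd_rest)
      then show ?thesis by (simp add: last matroid_block_row_ends colour_group_row_starts)
    qed
  qed
qed

lemma feasible_nonempty: "0 < m \<Longrightarrow> feasible m \<noteq> {}"
  using even_row_odd_rest_feasible by blast

lemma coverage_even_row_odd_rest:
  assumes "i < m"
  shows "coverage {..<m} (even_cells m) (even_row_odd_rest m i) = 1"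
proof -
  have "even_row_odd_rest m i \<inter> even_cells m i' = (if i' = i then even_cells m i else {})"
    if "i' < m" for i'
    using that assms by (auto simp: even_cells_def cell_in_even_row_odd_rest)
  moreover have "even_cells m i \<noteq> {}" by (simp add: even_cells_def)
  ultimately have "even_row_odd_rest m i \<inter> even_cells m i' \<noteq> {} \<longleftrightarrow> i' = i" if "i' < m" for i'
    using that by simp
  then have "{i' \<in> {..<m}. even_row_odd_rest m i \<inter> even_cells m i' \<noteq> {}} = {i}"
    using assms by auto
  then show ?thesis by (simp add: coverage_def)
qed

lemma max_coverage_feasible:
  assumes "0 < m"
  shows "Max (coverage {..<m} (even_cells m) ` feasible m) = 1"
proof (rule Max_eqI)
  show "finite (coverage {..<m} (even_cells m) ` feasible m)" by (simp add: finite_feasible)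
  show "y \<le> 1" if "y \<in> coverage {..<m} (even_cells m) ` feasible m" for y
    using that coverage_feasible_le_1 by blast
  show "1 \<in> coverage {..<m} (even_cells m) ` feasible m"
    using even_row_odd_rest_feasible[OF assms] coverage_even_row_odd_rest[OF assms]
    by (metis image_eqI)
qed

definition row_average :: "nat \<Rightarrow> nat \<Rightarrow> real" where
  "row_average m p = (\<Sum>i<m. 1 / real m * indicator (even_row_odd_rest m i) p)"

lemma row_average_in_polytope:
  assumes "0 < m"
  shows "row_average m \<in> indicator_polytope (feasible m)"
  unfolding row_average_def[abs_def]
  using assms even_row_odd_rest_feasible
  by (intro convex_combination_in_indicator_polytope) (auto simp: finite_feasible)

lemma row_average_even_cell:
  assumes "i < m" "p \<in> even_cells m i"
  shows "row_average m p = 1 / real m"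
proof -
  obtain k where "k \<le> m" "p = cell m i (2 * k)" using assms(2) by (auto simp: even_cells_def)
  then have "indicator (even_row_odd_rest m i') p = (if i' = i then 1 else 0 :: real)"
    if "i' < m" for i'
    using that assms(1) by (auto simp: indicator_def cell_in_even_row_odd_rest)
  then have "row_average m p = (\<Sum>i'<m. if i' = i then 1 / real m else 0)"
    unfolding row_average_def by (intro sum.cong) auto
  then show ?thesis using assms(1) by simp
qed

lemma multilinear_ext_coverage_row_average:
  assumes "0 < m"
  shows "multilinear_ext {..<m * (2 * m + 1)} (coverage {..<m} (even_cells m)) (row_average m)
    = real m * (1 - (1 - 1 / real m) ^ (m + 1))"
proof -
  have "multilinear_ext {..<m * (2 * m + 1)} (coverage {..<m} (even_cells m)) (row_average m)
      = (\<Sum>i<m. 1 - (\<Prod>p\<in>even_cells m i. 1 - row_average m p))"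
    by (rule multilinear_ext_coverage) (use even_cells_subset in auto)
  also have "\<dots> = (\<Sum>i<m. 1 - (1 - 1 / real m) ^ (m + 1))"
    by (intro sum.cong refl) (simp add: row_average_even_cell card_even_cells)
  finally show ?thesis by simp
qed

lemma sqrt_le_multilinear_ext_coverage_row_average:
  assumes "0 < m"
  shows "1 / 4 * sqrt (real (m * (2 * m + 1)))
    \<le> multilinear_ext {..<m * (2 * m + 1)} (coverage {..<m} (even_cells m)) (row_average m)"
proof -
  have "real (m * (2 * m + 1)) \<le> (2 * real m) ^ 2"
    using assms by (simp add: power2_eq_square algebra_simps)
  then have "sqrt (real (m * (2 * m + 1))) \<le> 2 * real m"
    by (simp add: real_sqrt_le_iff')
  moreover have "real m * (1 / 2) \<le> real m * (1 - (1 - 1 / real m) ^ (m + 1))"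
    using one_minus_inverse_power_le_half[OF assms] by (intro mult_left_mono) auto
  ultimately show ?thesis
    unfolding multilinear_ext_coverage_row_average[OF assms] by linarith
qed

theorem theorem3p2:
  shows "\<exists>c::real > 0. \<forall>N::nat. \<exists>n\<ge>N.
    \<exists>(f :: nat set \<Rightarrow> real) (G :: nat \<Rightarrow> nat set) (m :: nat) (k :: nat \<Rightarrow> nat)
      (Vc :: nat \<Rightarrow> nat set) (C :: nat) (l :: nat \<Rightarrow> nat) (u :: nat \<Rightarrow> nat).
      nonneg_set_fun {..<n} f \<and> submodular {..<n} f \<and> monotone_set_fun {..<n} f
      \<and> is_partition {..<n} G {..<m}
      \<and> is_partition {..<n} Vc {..<C} \<and> (\<forall>c<C. l c \<le> u c)
      \<and> partition_matroid {..<n} G m k \<inter> fair_sets {..<n} Vc C l u \<noteq> {}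
      \<and> Max (f ` (partition_matroid {..<n} G m k \<inter> fair_sets {..<n} Vc C l u)) = 1
      \<and> (\<exists>x \<in> indicator_polytope (partition_matroid {..<n} G m k \<inter> fair_sets {..<n} Vc C l u).
           multilinear_ext {..<n} f x \<ge> c * sqrt (real n))"
proof (intro exI[of _ "1/4 :: real"] conjI allI, goal_cases)
  case 1
  then show ?case by simp
next
  case (2 N)
  define m where "m = Suc N"
  have m: "0 < m" and "N \<le> m * (2 * m + 1)" by (simp_all add: m_def)
  with coverage_nonneg coverage_submodular[OF finite_lessThan] coverage_mono[OF finite_lessThan]
    is_partition_matroid_block[OF m] is_partition_colour_group[OF m] feasible_nonempty[OF m]
    max_coverage_feasible[OF m] row_average_in_polytope[OF m]
    sqrt_le_multilinear_ext_coverage_row_average[OF m]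
  show ?case unfolding feasible_def by blast
qed

end
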